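(* Under the assumption $\det[K^\pm(\omega)-\omega]\neq0$ for all $\omega>0$, the limit $\tilde R^\pm(\omega):=\lim_{\epsilon\to+0}\tilde R(\omega\pm i\epsilon)$ exists (in matrix norm) for every $\omega>0$ and $\tilde R^\pm(\omega)=[K^\pm(\omega)-\omega]^{-1}$.
   Context: Let $N\ge 1$ and $\mathcal H=\mathbb C^N\oplus L^2((0,\infty))$, where $|1\rangle,\dots,|N\rangle$ is the standard orthonormal basis of $\mathbb C^N$. Let $\omega_1\le\dots\le\omega_N$ be real, $\lambda\in\mathbb R$, $v_1,\dots,v_N\in L^2((0,\infty))$. The Hamiltonian is $H=H_0+\lambda V$ with $H_0(|c\rangle+|f\rangle)=\sum_n\omega_nc_n|n\rangle+\omega f(\omega)$ on $D(H_0)=\{|c\rangle+|f\rangle:\int_0^\infty|\omega f(\omega)|^2d\omega<\infty\}$ and $V(|c\rangle+|f\rangle)=\sum_n\langle v_n|f\rangle|n\rangle+\sum_n c_n v_n$. Form-factor assumption: for all $m,n$, $v_m^*(\omega)v_n(\omega)=\pi_{mn}(\omega)/\rho_{mn}(\omega)$ with polynomials such that $\deg\rho_{mn}\ge\deg\pi_{mn}+2$, $\rho_{mn}$ has no zeros in $[0,\infty)$, $\pi_{mn}(0)=0$; $\Gamma(\omega)$ is the matrix with entries $v_m^*(\omega)v_n(\omega)$. The reduced resolvent $\tilde R(z)$ is the $N\times N$ matrix with entries $\langle m|(H-z)^{-1}|n\rangle$ for $z$ in the resolvent set of $H$. Let $K_0=\mathrm{diag}(\omega_1,\dots,\omega_N)$;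 for $\omega>0$ let $D_{mn}(\omega)=P\!\int_0^\infty\frac{v_m^*(\omega')v_n(\omega')}{\omega'-\omega}d\omega'$ (principal value) and $K^\pm(\omega)=K_0-\lambda^2D(\omega)\mp i\pi\lambda^2\Gamma(\omega)$. *)

theory Defs
  imports "HOL-Analysis.Analysis" "HOL-Computational_Algebra.Polynomial"
begin

text \<open>Model: H = C^N (+) L^2((0,oo)). The index set {1..N} is a finite type 'n.
  Elements of L^2((0,oo)) are represented by functions real => complex
  (only values on (0,oo) matter).\<close>

definition L2pos :: "(real \<Rightarrow> complex) \<Rightarrow> bool" where
  "L2pos f \<longleftrightarrow> set_borel_measurable lborel {0<..} f \<and>
     set_integrable lborel {0<..} (\<lambda>w. (norm (f w))^2)"

definition L2inner :: "(real \<Rightarrow> complex) \<Rightarrow> (real \<Rightarrow> complex) \<Rightarrow> complex" where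
  "L2inner g f = (LINT w:{0<..}|lborel. cnj (g w) * f w)"

text \<open>(c,f) lies in D(H0) and solves (H - z)(c + f) = |n>, where
  H = H0 + lam V. Equality in L^2 means equality almost everywhere on (0,oo).\<close>
definition res_sol ::
  "('n::finite \<Rightarrow> real) \<Rightarrow> real \<Rightarrow> ('n \<Rightarrow> real \<Rightarrow> complex) \<Rightarrow> complex \<Rightarrow> 'n
     \<Rightarrow> ('n \<Rightarrow> complex) \<Rightarrow> (real \<Rightarrow> complex) \<Rightarrow> bool" where
  "res_sol om lam v z n c f \<longleftrightarrow>
     L2pos f \<and> L2pos (\<lambda>w. complex_of_real w * f w) \<and>
     (\<forall>m. complex_of_real (om m) * c m + complex_of_real lam * L2inner (v m) f - z * c m
            = (if m = n then 1 else 0)) \<and>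
     (AE w in lborel. w > 0 \<longrightarrow>
        complex_of_real w * f w + complex_of_real lam * (\<Sum>k\<in>UNIV. c k * v k w) - z * f w = 0)"

text \<open>Reduced resolvent: entry (m,n) is <m|(H - z)^{-1}|n>, i.e. the m-th C^N-component
  of the (unique, for z in the resolvent set) solution psi of (H - z) psi = |n>.\<close>
definition red_resolvent ::
  "('n::finite \<Rightarrow> real) \<Rightarrow> real \<Rightarrow> ('n \<Rightarrow> real \<Rightarrow> complex) \<Rightarrow> complex \<Rightarrow> complex^'n^'n" where
  "red_resolvent om lam v z =
     (\<chi> m n. THE x. \<exists>c f. res_sol om lam v z n c f \<and> x = c m)"

definition pv_integral :: "(real \<Rightarrow> complex) \<Rightarrow> real \<Rightarrow> complex" where
  "pv_integral g w =
     Lim (at_right 0) (\<lambda>d. integral ({0<..<w - d} \<union> {w + d<..}) (\<lambda>x. g x / complex_of_real (x - w)))"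

definition Gamma_mat :: "('n::finite \<Rightarrow> real \<Rightarrow> complex) \<Rightarrow> real \<Rightarrow> complex^'n^'n" where
  "Gamma_mat v w = (\<chi> m n. cnj (v m w) * v n w)"

definition D_mat :: "('n::finite \<Rightarrow> real \<Rightarrow> complex) \<Rightarrow> real \<Rightarrow> complex^'n^'n" where
  "D_mat v w = (\<chi> m n. pv_integral (\<lambda>x. cnj (v m x) * v n x) w)"

definition K0_mat :: "('n::finite \<Rightarrow> real) \<Rightarrow> complex^'n^'n" where
  "K0_mat om = (\<chi> m n. if m = n then complex_of_real (om m) else 0)"

text \<open>K^sigma(w) for sigma = 1 (K^+) and sigma = -1 (K^-):
  K0 - lam^2 D(w) - sigma i pi lam^2 Gamma(w).\<close>
definition K_mat :: "real \<Rightarrow> ('n::finite \<Rightarrow> real) \<Rightarrow> real \<Rightarrow> ('n \<Rightarrow> real \<Rightarrow> complex) \<Rightarrow> real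
     \<Rightarrow> complex^'n^'n" where
  "K_mat \<sigma> om lam v w = (\<chi> m n. K0_mat om $ m $ n
     - complex_of_real (lam^2) * D_mat v w $ m $ n
     - complex_of_real \<sigma> * \<i> * complex_of_real (pi * lam^2) * Gamma_mat v w $ m $ n)"

end

(*
  For z off the real axis the field component of a solution of (H - z) psi = |n> is forced to be
  f = -lam (sum_k c_k v_k) / (w - z); substituting it into the C^N component leaves the N x N system
  (K(z) - z) c = e_n, where K(z) = K0 - lam^2 F(z) and F_mk(z) = int_0^oo v_m^* v_k / (w - z) dw.
  The imaginary part of the quadratic form of K(z) - z is
  -Im z (|c|^2 + lam^2 int |sum_k c_k v_k|^2 / |w - z|^2), so K(z) - z is invertible and the reduced
  resolvent is its inverse.  The form factors are rational, decay like w^-2 and are Lipschitz near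
  every w > 0, so the Sokhotski-Plemelj formula gives F(w +- i eps) -> D(w) +- i pi Gamma(w), i.e.
  K(w +- i eps) -> K^+-(w); by Cramer's rule inversion is continuous at the invertible K^+-(w) - w.
*)
theory Submission
  imports Defs "HOL-Probability.Sinc_Integral"
begin

section \<open>Continuity of matrix inversion\<close>

lemma tendsto_det [tendsto_intros]:
  fixes F :: "'b \<Rightarrow> 'a::real_normed_field^'n::finite^'n"
  assumes "(F \<longlongrightarrow> A) net"
  shows "((\<lambda>e. det (F e)) \<longlongrightarrow> det A) net"
  unfolding det_def by (intro tendsto_intros assms)

lemma matrix_inv_right:
  fixes A :: "'a::field^'n::finite^'n"
  assumes "invertible A"
  shows "A ** matrix_inv A = mat 1"
  using assms someI_ex[of "\<lambda>A'. A ** A' = mat 1 \<and> A' ** A = mat 1"]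
  by (auto simp: matrix_inv_def invertible_def)

lemma matrix_vector_mult_axis_nth:
  fixes A :: "'a::semiring_1^'n::finite^'m"
  shows "(A *v axis n 1) $ m = A $ m $ n"
  by (simp add: matrix_vector_mult_def axis_def if_distrib cong: if_cong)

lemma matrix_inv_cramer:
  fixes A :: "'a::field^'n::finite^'n"
  assumes "det A \<noteq> 0"
  shows "matrix_inv A = (\<chi> m n. det (\<chi> i j. if j = m then axis n 1 $ i else A $ i $ j) / det A)"
proof -
  have "A ** matrix_inv A = mat 1"
    using assms by (simp add: matrix_inv_right invertible_det_nz)
  then have "A *v (matrix_inv A *v axis n 1) = axis n 1" for n
    by (simp add: matrix_vector_mul_assoc)
  then have "matrix_inv A *v axis n 1 = (\<chi> m. det (\<chi> i j. if j = m then axis n 1 $ i else A $ i $ j) / det A)" for n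
    using cramer[OF assms] by blast
  then show ?thesis
    by (simp add: vec_eq_iff flip: matrix_vector_mult_axis_nth)
qed

lemma tendsto_matrix_inv:
  fixes F :: "'b \<Rightarrow> 'a::real_normed_field^'n::finite^'n"
  assumes F: "(F \<longlongrightarrow> A) net" and A: "det A \<noteq> 0"
  shows "((\<lambda>e. matrix_inv (F e)) \<longlongrightarrow> matrix_inv A) net"
proof (rule Lim_transform_eventually)
  show "((\<lambda>e. \<chi> m n. det (\<chi> i j. if j = m then axis n 1 $ i else F e $ i $ j) / det (F e))
      \<longlongrightarrow> matrix_inv A) net"
  proof -
    have "((\<lambda>e. F e $ i $ j) \<longlongrightarrow> A $ i $ j) net" for i j
      by (intro tendsto_vec_nth F)
    then show ?thesis
      unfolding matrix_inv_cramer[OF A] using A F by (intro tendsto_intros) auto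
  qed
  have "eventually (\<lambda>e. det (F e) \<noteq> 0) net"
    using tendsto_det[OF F] A by (rule tendsto_imp_eventually_ne)
  then show "eventually (\<lambda>e. (\<chi> m n. det (\<chi> i j. if j = m then axis n 1 $ i else F e $ i $ j) / det (F e))
      = matrix_inv (F e)) net"
    by eventually_elim (simp add: matrix_inv_cramer)
qed

section \<open>Square-integrable functions on (0, \<infinity>)\<close>

lemma real_minus_nonreal_nonzero:
  assumes "Im z \<noteq> 0"
  shows "of_real x - z \<noteq> 0"
  using assms by (metis Im_complex_of_real eq_iff_diff_eq_0)

lemma set_integrable_divide_real_minus:
  fixes g :: "real \<Rightarrow> complex"
  assumes g: "set_integrable lborel {0<..} g" and z: "Im z \<noteq> 0"
  shows "set_integrable lborel {0<..} (\<lambda>x. g x / (of_real x - z))"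
  unfolding set_integrable_def
proof (rule Bochner_Integration.integrable_bound)
  show "integrable lborel (\<lambda>x. norm (indicator {0<..} x *\<^sub>R g x) / \<bar>Im z\<bar>)"
    using g unfolding set_integrable_def by (intro integrable_divide_zero integrable_norm)
  have "(\<lambda>x. (indicator {0<..} x *\<^sub>R g x) / (of_real x - z)) \<in> borel_measurable lborel"
    using g unfolding set_integrable_def
    by (intro borel_measurable_divide borel_measurable_diff borel_measurable_of_real) auto
  then show "(\<lambda>x. indicator {0<..} x *\<^sub>R (g x / (of_real x - z))) \<in> borel_measurable lborel"
    by (simp add: scaleR_conv_of_real)
  have "norm (g x / (of_real x - z)) \<le> norm (g x) / \<bar>Im z\<bar>" for x
  proof -
    have "\<bar>Im z\<bar> \<le> norm (of_real x - z)"
      using abs_Im_le_cmod[of "of_real x - z"] by simp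
    then show ?thesis
      using z by (simp add: norm_divide frac_le)
  qed
  then show "AE x in lborel. norm (indicator {0<..} x *\<^sub>R (g x / (of_real x - z)))
      \<le> norm (norm (indicator {0<..} x *\<^sub>R g x) / \<bar>Im z\<bar>)"
    by (intro always_eventually allI) (auto simp: indicator_def)
qed

lemma set_integrable_cnj_mult:
  assumes f: "L2pos f" and g: "L2pos g"
  shows "set_integrable lborel {0<..} (\<lambda>x. cnj (f x) * g x)"
  unfolding set_integrable_def
proof (rule Bochner_Integration.integrable_bound)
  show "integrable lborel (\<lambda>x. indicator {0<..} x *\<^sub>R (norm (f x))^2 + indicator {0<..} x *\<^sub>R (norm (g x))^2)"
    using f g unfolding L2pos_def set_integrable_def by auto
  have "(\<lambda>x. cnj (indicator {0<..} x *\<^sub>R f x) * (indicator {0<..} x *\<^sub>R g x)) \<in> borel_measurable lborel"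
    using f g unfolding L2pos_def set_borel_measurable_def
    by (intro borel_measurable_times borel_measurable_continuous_on[where f=cnj] continuous_intros) auto
  moreover have "(\<lambda>x. cnj (indicator {0<..} x *\<^sub>R f x) * (indicator {0<..} x *\<^sub>R g x))
      = (\<lambda>x. indicator {0<..} x *\<^sub>R (cnj (f x) * g x))"
    by (auto simp: indicator_def)
  ultimately show "(\<lambda>x. indicator {0<..} x *\<^sub>R (cnj (f x) * g x)) \<in> borel_measurable lborel"
    by simp
  have "norm (f x) * norm (g x) \<le> (norm (f x))^2 + (norm (g x))^2" for x
    using sum_squares_bound[of "norm (f x)" "norm (g x)"] mult_nonneg_nonneg[OF norm_ge_zero norm_ge_zero, of "f x" "g x"]
    by linarith
  then show "AE x in lborel. norm (indicator {0<..} x *\<^sub>R (cnj (f x) * g x))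
      \<le> norm (indicator {0<..} x *\<^sub>R (norm (f x))^2 + indicator {0<..} x *\<^sub>R (norm (g x))^2)"
    by (intro always_eventually allI) (auto simp: indicator_def norm_mult)
qed

lemma L2pos_bounded_mult:
  fixes U a :: "real \<Rightarrow> complex"
  assumes U: "L2pos U" and a_meas: "a \<in> borel_measurable lborel" and a_bound: "\<And>x. norm (a x) \<le> A"
  shows "L2pos (\<lambda>x. a x * U x)"
proof -
  have U_meas: "set_borel_measurable lborel {0<..} U"
    and U_int: "set_integrable lborel {0<..} (\<lambda>x. (norm (U x))^2)"
    using U unfolding L2pos_def by auto
  have meas: "(\<lambda>x. indicator {0<..} x *\<^sub>R (a x * U x)) \<in> borel_measurable lborel"
  proof -
    have "(\<lambda>x. a x * (indicator {0<..} x *\<^sub>R U x)) \<in> borel_measurable lborel"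
      using a_meas U_meas unfolding set_borel_measurable_def by (intro borel_measurable_times) auto
    moreover have "(\<lambda>x. a x * (indicator {0<..} x *\<^sub>R U x)) = (\<lambda>x. indicator {0<..} x *\<^sub>R (a x * U x))"
      by (auto simp: indicator_def)
    ultimately show ?thesis by simp
  qed
  have "set_integrable lborel {0<..} (\<lambda>x. (norm (a x * U x))^2)"
    unfolding set_integrable_def
  proof (rule Bochner_Integration.integrable_bound)
    show "integrable lborel (\<lambda>x. A^2 * (indicator {0<..} x *\<^sub>R (norm (U x))^2))"
      using U_int unfolding set_integrable_def by simp
    have "(\<lambda>x. (norm (indicator {0<..} x *\<^sub>R (a x * U x)))^2) \<in> borel_measurable lborel"
      using meas by measurable
    moreover have "(\<lambda>x. (norm (indicator {0<..} x *\<^sub>R (a x * U x)))^2)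
        = (\<lambda>x. indicator {0<..} x *\<^sub>R (norm (a x * U x))^2)"
      by (auto simp: indicator_def)
    ultimately show "(\<lambda>x. indicator {0<..} x *\<^sub>R (norm (a x * U x))^2) \<in> borel_measurable lborel"
      by simp
    have "(norm (a x))^2 * (norm (U x))^2 \<le> A^2 * (norm (U x))^2" for x
      using a_bound[of x] by (intro mult_right_mono power_mono) auto
    then show "AE x in lborel. norm (indicator {0<..} x *\<^sub>R (norm (a x * U x))^2)
        \<le> norm (A^2 * (indicator {0<..} x *\<^sub>R (norm (U x))^2))"
      by (intro always_eventually allI) (auto simp: indicator_def norm_mult power_mult_distrib)
  qed
  then show ?thesis
    unfolding L2pos_def set_borel_measurable_def using meas by simp
qed

lemma L2pos_sum:
  fixes v :: "'n::finite \<Rightarrow> real \<Rightarrow> complex"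
  assumes v: "\<And>k. L2pos (v k)"
  shows "L2pos (\<lambda>x. \<Sum>k\<in>UNIV. c k * v k x)"
proof -
  let ?U = "\<lambda>x. \<Sum>k\<in>UNIV. c k * v k x"
  have "(\<lambda>x. \<Sum>k\<in>UNIV. c k * (indicator {0<..} x *\<^sub>R v k x)) \<in> borel_measurable lborel"
    using v unfolding L2pos_def set_borel_measurable_def
    by (intro borel_measurable_sum borel_measurable_times borel_measurable_const) auto
  moreover have "(\<lambda>x. \<Sum>k\<in>UNIV. c k * (indicator {0<..} x *\<^sub>R v k x)) = (\<lambda>x. indicator {0<..} x *\<^sub>R ?U x)"
    by (auto simp: indicator_def)
  ultimately have meas: "set_borel_measurable lborel {0<..} ?U"
    unfolding set_borel_measurable_def by simp
  have "indicator {0<..} x *\<^sub>R (norm (?U x))^2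
      = Re (\<Sum>m\<in>UNIV. \<Sum>k\<in>UNIV. cnj (c m) * c k * (indicator {0<..} x *\<^sub>R (cnj (v m x) * v k x)))" for x
  proof -
    have "complex_of_real ((norm (?U x))^2) = cnj (?U x) * ?U x"
      using complex_norm_square[of "?U x"] by (simp add: mult.commute)
    also have "\<dots> = (\<Sum>m\<in>UNIV. \<Sum>k\<in>UNIV. cnj (c m) * c k * (cnj (v m x) * v k x))"
      by (simp add: cnj_sum sum_product algebra_simps, subst sum.swap, simp)
    finally have "(norm (?U x))^2 = Re (\<Sum>m\<in>UNIV. \<Sum>k\<in>UNIV. cnj (c m) * c k * (cnj (v m x) * v k x))"
      by (metis Re_complex_of_real)
    then show ?thesis
      by (auto simp: indicator_def)
  qed
  moreover have "integrable lborel (\<lambda>x. Re (\<Sum>m\<in>UNIV. \<Sum>k\<in>UNIV. cnj (c m) * c k * (indicator {0<..} x *\<^sub>R (cnj (v m x) * v k x))))"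
    using set_integrable_cnj_mult[OF v v] unfolding set_integrable_def
    by (intro integrable_bounded_linear[OF bounded_linear_Re] Bochner_Integration.integrable_sum integrable_mult_right)
  ultimately have "set_integrable lborel {0<..} (\<lambda>x. (norm (?U x))^2)"
    unfolding set_integrable_def by simp
  with meas show ?thesis
    unfolding L2pos_def by simp
qed

lemma L2pos_divide_real_minus:
  fixes U :: "real \<Rightarrow> complex"
  assumes U: "L2pos U" and z: "Im z \<noteq> 0"
  shows "L2pos (\<lambda>x. U x / (of_real x - z))" and "L2pos (\<lambda>x. of_real x * (U x / (of_real x - z)))"
proof -
  have dist: "\<bar>Im z\<bar> \<le> norm (of_real x - z)" for x
    using abs_Im_le_cmod[of "of_real x - z"] by simp
  have z_pos: "\<bar>Im z\<bar> > 0"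
    using z by simp
  have denom_meas: "(\<lambda>x. of_real x - z) \<in> borel_measurable lborel"
    by (intro borel_measurable_diff borel_measurable_of_real borel_measurable_const)
      (auto simp: measurable_lborel2)
  have "L2pos (\<lambda>x. (1 / (of_real x - z)) * U x)"
  proof (rule L2pos_bounded_mult[OF U])
    show "(\<lambda>x. 1 / (of_real x - z)) \<in> borel_measurable lborel"
      using denom_meas by (intro borel_measurable_divide borel_measurable_const) auto
    show "norm (1 / (of_real x - z)) \<le> 1 / \<bar>Im z\<bar>" for x
      using dist[of x] z_pos by (simp add: norm_divide frac_le)
  qed
  then show "L2pos (\<lambda>x. U x / (of_real x - z))"
    by simp
  have "L2pos (\<lambda>x. (of_real x / (of_real x - z)) * U x)"
  proof (rule L2pos_bounded_mult[OF U])
    show "(\<lambda>x. of_real x / (of_real x - z)) \<in> borel_measurable lborel"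
      using denom_meas by (intro borel_measurable_divide borel_measurable_of_real) (auto simp: measurable_lborel2)
    show "norm (of_real x / (of_real x - z)) \<le> 1 + norm z / \<bar>Im z\<bar>" for x
    proof -
      have pos: "norm (of_real x - z) > 0"
        using dist[of x] z_pos by linarith
      have "norm (complex_of_real x) \<le> norm (of_real x - z) + norm z"
        by (metis diff_add_cancel norm_triangle_ineq)
      then have "norm (complex_of_real x) / norm (of_real x - z) \<le> 1 + norm z / norm (of_real x - z)"
        using pos by (simp add: field_simps)
      also have "\<dots> \<le> 1 + norm z / \<bar>Im z\<bar>"
        using dist[of x] z_pos by (simp add: frac_le)
      finally show ?thesis
        by (simp add: norm_divide)
    qed
  qed
  then show "L2pos (\<lambda>x. of_real x * (U x / (of_real x - z)))"
    by (simp add: ac_simps)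
qed

section \<open>The reduced resolvent off the real axis\<close>

definition self_energy :: "('n::finite \<Rightarrow> real \<Rightarrow> complex) \<Rightarrow> complex \<Rightarrow> complex^'n^'n" where
  "self_energy v z = (\<chi> m k. LINT x:{0<..}|lborel. cnj (v m x) * v k x / (of_real x - z))"

definition Kz_mat :: "('n::finite \<Rightarrow> real) \<Rightarrow> real \<Rightarrow> ('n \<Rightarrow> real \<Rightarrow> complex) \<Rightarrow> complex \<Rightarrow> complex^'n^'n" where
  "Kz_mat om lam v z = (\<chi> m k. K0_mat om $ m $ k - of_real (lam^2) * self_energy v z $ m $ k)"

lemma Kz_mat_minus_mult_nth:
  "((Kz_mat om lam v z - mat z) *v c) $ m
     = (of_real (om m) - z) * c $ m - of_real (lam^2) * (\<Sum>k\<in>UNIV. c $ k * self_energy v z $ m $ k)"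
proof -
  have "((Kz_mat om lam v z - mat z) *v c) $ m
      = (\<Sum>k\<in>UNIV. (if m = k then of_real (om m) - z else 0) * c $ k - of_real (lam^2) * (c $ k * self_energy v z $ m $ k))"
    by (auto simp: matrix_vector_mult_def Kz_mat_def K0_mat_def mat_def algebra_simps intro!: sum.cong)
  also have "\<dots> = (of_real (om m) - z) * c $ m - of_real (lam^2) * (\<Sum>k\<in>UNIV. c $ k * self_energy v z $ m $ k)"
    by (simp add: sum_subtractf sum_distrib_left if_distrib[of "\<lambda>a. a * _"] cong: if_cong)
  finally show ?thesis .
qed

lemma L2inner_eq_self_energy:
  assumes v: "\<And>k. L2pos (v k)" and z: "Im z \<noteq> 0"
    and f_meas: "set_borel_measurable lborel {0<..} f"
    and f_eq: "AE x in lborel. x > 0 \<longrightarrow> f x = - of_real lam * (\<Sum>k\<in>UNIV. c k * v k x) / (of_real x - z)"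
  shows "L2inner (v m) f = - of_real lam * (\<Sum>k\<in>UNIV. c k * self_energy v z $ m $ k)"
proof -
  define F where "F = (\<lambda>k x. indicator {0<..} x *\<^sub>R (cnj (v m x) * v k x / (of_real x - z)))"
  have F_int: "integrable lborel (F k)" for k
    using set_integrable_divide_real_minus[OF set_integrable_cnj_mult[OF v v] z]
    unfolding F_def set_integrable_def .
  have "L2inner (v m) f = integral\<^sup>L lborel (\<lambda>x. indicator {0<..} x *\<^sub>R (cnj (v m x) * f x))"
    unfolding L2inner_def set_lebesgue_integral_def ..
  also have "\<dots> = integral\<^sup>L lborel (\<lambda>x. \<Sum>k\<in>UNIV. (- of_real lam * c k) * F k x)"
  proof (rule integral_cong_AE)
    have "(\<lambda>x. cnj (indicator {0<..} x *\<^sub>R v m x) * (indicator {0<..} x *\<^sub>R f x)) \<in> borel_measurable lborel"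
      using v[of m] f_meas unfolding L2pos_def set_borel_measurable_def
      by (intro borel_measurable_times borel_measurable_continuous_on[where f=cnj] continuous_intros) auto
    moreover have "(\<lambda>x. cnj (indicator {0<..} x *\<^sub>R v m x) * (indicator {0<..} x *\<^sub>R f x))
        = (\<lambda>x. indicator {0<..} x *\<^sub>R (cnj (v m x) * f x))"
      by (auto simp: indicator_def)
    ultimately show "(\<lambda>x. indicator {0<..} x *\<^sub>R (cnj (v m x) * f x)) \<in> borel_measurable lborel"
      by simp
    show "(\<lambda>x. \<Sum>k\<in>UNIV. (- of_real lam * c k) * F k x) \<in> borel_measurable lborel"
      using F_int by (intro borel_measurable_sum borel_measurable_times borel_measurable_const) auto
    show "AE x in lborel. indicator {0<..} x *\<^sub>R (cnj (v m x) * f x) = (\<Sum>k\<in>UNIV. (- of_real lam * c k) * F k x)"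
      using f_eq
    proof eventually_elim
      case (elim x)
      show ?case
      proof (cases "x > 0")
        case True
        then have "cnj (v m x) * f x = (\<Sum>k\<in>UNIV. (- of_real lam * c k) * (cnj (v m x) * v k x / (of_real x - z)))"
          using elim by (simp add: sum_distrib_left sum_divide_distrib algebra_simps)
        then show ?thesis
          using True by (simp add: F_def)
      qed (simp add: F_def)
    qed
  qed
  also have "\<dots> = (\<Sum>k\<in>UNIV. (- of_real lam * c k) * integral\<^sup>L lborel (F k))"
    using F_int by (subst Bochner_Integration.integral_sum) auto
  also have "\<dots> = - of_real lam * (\<Sum>k\<in>UNIV. c k * self_energy v z $ m $ k)"
    by (simp add: F_def self_energy_def set_lebesgue_integral_def sum_distrib_left algebra_simps)
  finally show ?thesis .
qed

lemma res_sol_imp_reduced_system: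
  assumes v: "\<And>k. L2pos (v k)" and z: "Im z \<noteq> 0" and sol: "res_sol om lam v z n c f"
  shows "(Kz_mat om lam v z - mat z) *v (\<chi> i. c i) = axis n 1"
proof -
  from sol have f: "L2pos f"
    and eq: "\<And>m. of_real (om m) * c m + of_real lam * L2inner (v m) f - z * c m = (if m = n then 1 else 0)"
    and ae: "AE x in lborel. x > 0 \<longrightarrow> of_real x * f x + of_real lam * (\<Sum>k\<in>UNIV. c k * v k x) - z * f x = 0"
    unfolding res_sol_def by auto
  have f_meas: "set_borel_measurable lborel {0<..} f"
    using f unfolding L2pos_def by simp
  have f_eq: "AE x in lborel. x > 0 \<longrightarrow> f x = - of_real lam * (\<Sum>k\<in>UNIV. c k * v k x) / (of_real x - z)"
    using ae
  proof eventually_elim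
    case (elim x)
    show ?case
    proof
      assume "x > 0"
      then have "(of_real x - z) * f x = - of_real lam * (\<Sum>k\<in>UNIV. c k * v k x)"
        using elim by (simp add: algebra_simps add_eq_0_iff)
      then show "f x = - of_real lam * (\<Sum>k\<in>UNIV. c k * v k x) / (of_real x - z)"
        using real_minus_nonreal_nonzero[OF z, of x] by (simp add: field_simps)
    qed
  qed
  have "((Kz_mat om lam v z - mat z) *v (\<chi> i. c i)) $ m = axis n 1 $ m" for m
  proof -
    have "((Kz_mat om lam v z - mat z) *v (\<chi> i. c i)) $ m
        = of_real (om m) * c m + of_real lam * L2inner (v m) f - z * c m"
      unfolding Kz_mat_minus_mult_nth L2inner_eq_self_energy[OF v z f_meas f_eq]
      by (simp add: power2_eq_square algebra_simps)
    also have "\<dots> = axis n 1 $ m"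
      using eq[of m] by (simp add: axis_def)
    finally show ?thesis .
  qed
  then show ?thesis
    by (simp add: vec_eq_iff)
qed

lemma reduced_system_imp_res_sol:
  assumes v: "\<And>k. L2pos (v k)" and z: "Im z \<noteq> 0"
    and c: "(Kz_mat om lam v z - mat z) *v c = axis n 1"
  shows "res_sol om lam v z n (($) c) (\<lambda>x. - of_real lam * (\<Sum>k\<in>UNIV. c $ k * v k x) / (of_real x - z))"
proof -
  define f where "f = (\<lambda>x. - of_real lam * (\<Sum>k\<in>UNIV. c $ k * v k x) / (of_real x - z))"
  have U: "L2pos (\<lambda>x. \<Sum>k\<in>UNIV. (- of_real lam * c $ k) * v k x)"
    by (rule L2pos_sum[OF v])
  have f_U: "f = (\<lambda>x. (\<Sum>k\<in>UNIV. (- of_real lam * c $ k) * v k x) / (of_real x - z))"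
    by (simp add: f_def sum_distrib_left mult.assoc)
  have f_L2: "L2pos f"
    unfolding f_U by (rule L2pos_divide_real_minus(1)[OF U z])
  have xf_L2: "L2pos (\<lambda>x. of_real x * f x)"
    unfolding f_U by (rule L2pos_divide_real_minus(2)[OF U z])
  have f_meas: "set_borel_measurable lborel {0<..} f"
    using f_L2 unfolding L2pos_def by simp
  have f_eq: "AE x in lborel. x > 0 \<longrightarrow> f x = - of_real lam * (\<Sum>k\<in>UNIV. c $ k * v k x) / (of_real x - z)"
    by (simp add: f_def)
  have eqs: "of_real (om m) * c $ m + of_real lam * L2inner (v m) f - z * c $ m = (if m = n then 1 else 0)" for m
  proof -
    have "of_real (om m) * c $ m + of_real lam * L2inner (v m) f - z * c $ m
        = ((Kz_mat om lam v z - mat z) *v c) $ m"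
      unfolding Kz_mat_minus_mult_nth L2inner_eq_self_energy[OF v z f_meas f_eq]
      by (simp add: power2_eq_square algebra_simps)
    then show ?thesis
      by (simp add: c axis_def)
  qed
  have "of_real x * f x + of_real lam * (\<Sum>k\<in>UNIV. c $ k * v k x) - z * f x = 0" for x
    using real_minus_nonreal_nonzero[OF z, of x] by (simp add: f_def field_simps)
  then show ?thesis
    using f_L2 xf_L2 eqs unfolding res_sol_def f_def by auto
qed

text \<open>Since \<open>Im (1 / (t - z)) = Im z / \<bar>t - z\<bar>\<^sup>2\<close>, one can take
  \<open>I = \<integral>\<^sub>0\<^sup>\<infinity> \<bar>\<Sum>\<^sub>k x\<^sub>k v\<^sub>k t\<bar>\<^sup>2 / \<bar>t - z\<bar>\<^sup>2 dt\<close>.\<close>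

lemma Im_self_energy_form:
  assumes v: "\<And>k. L2pos (v k)" and z: "Im z \<noteq> 0"
  obtains I where "I \<ge> 0"
    and "Im (\<Sum>m\<in>UNIV. \<Sum>k\<in>UNIV. cnj (x $ m) * x $ k * self_energy v z $ m $ k) = Im z * I"
proof
  define U where "U = (\<lambda>t. \<Sum>k\<in>UNIV. x $ k * v k t)"
  define F where "F = (\<lambda>m k t. indicator {0<..} t *\<^sub>R (cnj (v m t) * v k t / (of_real t - z)))"
  define H where "H = (\<lambda>t. indicator {0<..} t *\<^sub>R (of_real ((norm (U t))^2) / (of_real t - z)))"
  define I where "I = integral\<^sup>L lborel (\<lambda>t. indicator {0<..} t * ((norm (U t))^2 / ((t - Re z)^2 + (Im z)^2)))"
  have F_int: "integrable lborel (F m k)" for m k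
    using set_integrable_divide_real_minus[OF set_integrable_cnj_mult[OF v v] z]
    unfolding F_def set_integrable_def .
  have H_sum: "H = (\<lambda>t. \<Sum>m\<in>UNIV. \<Sum>k\<in>UNIV. cnj (x $ m) * x $ k * F m k t)"
  proof
    fix t
    have "of_real ((norm (U t))^2) = cnj (U t) * U t"
      using complex_norm_square[of "U t"] by (simp add: mult.commute)
    also have "\<dots> = (\<Sum>m\<in>UNIV. \<Sum>k\<in>UNIV. cnj (x $ m) * x $ k * (cnj (v m t) * v k t))"
      by (simp add: U_def cnj_sum sum_product algebra_simps, subst sum.swap, simp)
    finally show "H t = (\<Sum>m\<in>UNIV. \<Sum>k\<in>UNIV. cnj (x $ m) * x $ k * F m k t)"
      by (simp add: H_def F_def sum_divide_distrib sum_distrib_left indicator_def)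
  qed
  have H_int: "integrable lborel H"
    unfolding H_sum using F_int by auto
  have "self_energy v z $ m $ k = integral\<^sup>L lborel (F m k)" for m k
    by (simp add: self_energy_def set_lebesgue_integral_def F_def)
  then have "(\<Sum>m\<in>UNIV. \<Sum>k\<in>UNIV. cnj (x $ m) * x $ k * self_energy v z $ m $ k)
      = (\<Sum>m\<in>UNIV. \<Sum>k\<in>UNIV. integral\<^sup>L lborel (\<lambda>t. cnj (x $ m) * x $ k * F m k t))"
    by simp
  also have "\<dots> = integral\<^sup>L lborel H"
    unfolding H_sum using F_int by (simp add: Bochner_Integration.integral_sum)
  finally have "Im (\<Sum>m\<in>UNIV. \<Sum>k\<in>UNIV. cnj (x $ m) * x $ k * self_energy v z $ m $ k)
      = integral\<^sup>L lborel (\<lambda>t. Im (H t))"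
    using H_int by simp
  also have "\<dots> = Im z * I"
  proof -
    have "Im (H t) = Im z * (indicator {0<..} t * ((norm (U t))^2 / ((t - Re z)^2 + (Im z)^2)))" for t
      by (simp add: H_def Im_divide indicator_def mult_ac)
    then show ?thesis
      unfolding I_def by (simp only:) (rule integral_mult_right_zero)
  qed
  finally show "Im (\<Sum>m\<in>UNIV. \<Sum>k\<in>UNIV. cnj (x $ m) * x $ k * self_energy v z $ m $ k) = Im z * I" .
  show "I \<ge> 0"
    unfolding I_def by (rule Bochner_Integration.integral_nonneg) auto
qed

lemma invertible_Kz_mat_minus:
  assumes v: "\<And>k. L2pos (v k)" and z: "Im z \<noteq> 0"
  shows "invertible (Kz_mat om lam v z - mat z)"
  unfolding invertible_left_inverse matrix_left_invertible_ker
proof (intro allI impI)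
  fix x assume Mx: "(Kz_mat om lam v z - mat z) *v x = 0"
  define T where "T = (\<Sum>m\<in>UNIV. \<Sum>k\<in>UNIV. cnj (x $ m) * x $ k * self_energy v z $ m $ k)"
  obtain I where I: "I \<ge> 0" and Im_T: "Im T = Im z * I"
    using Im_self_energy_form[OF v z] unfolding T_def .
  have "(\<Sum>m\<in>UNIV. cnj (x $ m) * ((Kz_mat om lam v z - mat z) *v x) $ m)
      = (\<Sum>m\<in>UNIV. (of_real (om m) - z) * of_real ((norm (x $ m))^2)) - of_real (lam^2) * T"
  proof -
    have "complex_of_real ((norm (x $ m))^2) = x $ m * cnj (x $ m)" for m
      using complex_norm_square[of "x $ m"] by simp
    then show ?thesis
      unfolding Kz_mat_minus_mult_nth T_def
      by (simp add: sum_subtractf sum_distrib_left sum.distrib algebra_simps)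
  qed
  then have form_zero: "(\<Sum>m\<in>UNIV. (of_real (om m) - z) * of_real ((norm (x $ m))^2)) - of_real (lam^2) * T = 0"
    by (simp add: Mx)
  have "- Im z * ((\<Sum>m\<in>UNIV. (norm (x $ m))^2) + lam^2 * I)
      = Im ((\<Sum>m\<in>UNIV. (of_real (om m) - z) * of_real ((norm (x $ m))^2)) - of_real (lam^2) * T)"
    by (simp add: Im_sum sum_distrib_left Im_T algebra_simps)
  also have "\<dots> = 0"
    unfolding form_zero by simp
  finally have "- Im z * ((\<Sum>m\<in>UNIV. (norm (x $ m))^2) + lam^2 * I) = 0" .
  then have "(\<Sum>m\<in>UNIV. (norm (x $ m))^2) + lam^2 * I = 0"
    using z by simp
  moreover have "(\<Sum>m\<in>UNIV. (norm (x $ m))^2) \<ge> 0" "lam^2 * I \<ge> 0"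
    using I by (auto intro: sum_nonneg)
  ultimately have "(\<Sum>m\<in>UNIV. (norm (x $ m))^2) = 0"
    by linarith
  then show "x = 0"
    by (simp add: sum_nonneg_eq_0_iff vec_eq_iff)
qed

lemma red_resolvent_eq_matrix_inv:
  assumes v: "\<And>k. L2pos (v k)" and z: "Im z \<noteq> 0"
  shows "red_resolvent om lam v z = matrix_inv (Kz_mat om lam v z - mat z)"
proof -
  let ?M = "Kz_mat om lam v z - mat z"
  have inv: "invertible ?M"
    by (rule invertible_Kz_mat_minus[OF v z])
  have column: "?M *v (matrix_inv ?M *v axis n 1) = axis n 1" for n
    using matrix_inv_right[OF inv] by (simp add: matrix_vector_mul_assoc)
  have unique: "c m = matrix_inv ?M $ m $ n" if "res_sol om lam v z n c f" for n c f m
  proof -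
    have "?M *v ((\<chi> i. c i) - matrix_inv ?M *v axis n 1) = 0"
      using res_sol_imp_reduced_system[OF v z that] column by (simp add: matrix_vector_mult_diff_distrib)
    then have "(\<chi> i. c i) = matrix_inv ?M *v axis n 1"
      using inv unfolding invertible_left_inverse matrix_left_invertible_ker by auto
    then show ?thesis
      by (metis matrix_vector_mult_axis_nth vec_lambda_beta)
  qed
  have "(THE y. \<exists>c f. res_sol om lam v z n c f \<and> y = c m) = matrix_inv ?M $ m $ n" for m n
  proof (rule the_equality)
    show "\<exists>c f. res_sol om lam v z n c f \<and> matrix_inv ?M $ m $ n = c m"
    proof (intro exI conjI)
      show "res_sol om lam v z n (($) (matrix_inv ?M *v axis n 1))
          (\<lambda>x. - of_real lam * (\<Sum>k\<in>UNIV. (matrix_inv ?M *v axis n 1) $ k * v k x) / (of_real x - z))"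
        by (rule reduced_system_imp_res_sol[OF v z column])
      show "matrix_inv ?M $ m $ n = (matrix_inv ?M *v axis n 1) $ m"
        by (rule matrix_vector_mult_axis_nth[symmetric])
    qed
  next
    fix y assume "\<exists>c f. res_sol om lam v z n c f \<and> y = c m"
    then obtain c f where "res_sol om lam v z n c f" "y = c m"
      by blast
    then show "y = matrix_inv ?M $ m $ n"
      using unique by simp
  qed
  then show ?thesis
    unfolding red_resolvent_def by (simp add: vec_eq_iff)
qed

section \<open>Rational form factors\<close>

lemma poly_ratio_inverse_eq_reflect:
  fixes s r :: "'a::field poly"
  assumes deg: "degree s \<le> degree r" and t: "t \<noteq> 0"
  shows "poly s (inverse t) / poly r (inverse t)
    = t ^ (degree r - degree s) * poly (reflect_poly s) t / poly (reflect_poly r) t"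
proof -
  have "t ^ (degree r - degree s) * t ^ degree s = t ^ degree r"
    using deg by (simp add: power_add[symmetric])
  then show ?thesis
    using t by (cases "poly r (inverse t) = 0") (simp_all add: poly_reflect_poly_nz field_simps)
qed

lemma poly_ratio_bounded_nonneg:
  fixes s r :: "complex poly"
  assumes deg: "degree s \<le> degree r" and nz: "\<And>x::real. x \<ge> 0 \<Longrightarrow> poly r (of_real x) \<noteq> 0"
  obtains B where "\<And>x::real. x \<ge> 0 \<Longrightarrow> norm (poly s (of_real x) / poly r (of_real x)) \<le> B"
proof -
  have "continuous_on {0..1} (\<lambda>x::real. poly s (of_real x) / poly r (of_real x))"
    using nz by (intro continuous_intros) auto
  then obtain B1 where B1: "\<And>x. x \<in> {0..1} \<Longrightarrow> norm (poly s (of_real x) / poly r (of_real x)) \<le> B1"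
    using continuous_on_compact_bound[OF compact_Icc] by blast
  have reflect_nz: "poly (reflect_poly r) (of_real t) \<noteq> 0" if "t \<in> {0..1}" for t :: real
  proof (cases "t = 0")
    case True
    have "r \<noteq> 0"
      using nz[of 0] by auto
    then show ?thesis
      using True by (simp add: poly_0_coeff_0 coeff_0_reflect_poly)
  next
    case False
    then show ?thesis
      using that nz[of "inverse t"] by (simp add: poly_reflect_poly_nz)
  qed
  (* On [1, oo) substitute x = 1/t: the reflected ratio is continuous on [0, 1]. *)
  have "continuous_on {0..1} (\<lambda>t::real. of_real t ^ (degree r - degree s) * poly (reflect_poly s) (of_real t)
      / poly (reflect_poly r) (of_real t))"
    using reflect_nz by (intro continuous_intros) auto
  then obtain B2 where B2: "\<And>t. t \<in> {0..1} \<Longrightarrow>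
      norm (of_real t ^ (degree r - degree s) * poly (reflect_poly s) (of_real t) / poly (reflect_poly r) (of_real t)) \<le> B2"
    using continuous_on_compact_bound[OF compact_Icc] by blast
  have "norm (poly s (of_real x) / poly r (of_real x)) \<le> max B1 B2" if "x \<ge> 0" for x :: real
  proof (cases "x \<le> 1")
    case True
    then show ?thesis
      using B1[of x] that by force
  next
    case False
    then have "inverse x \<in> {0..1}" "of_real (inverse x) \<noteq> (0::complex)"
      by (auto simp: field_simps)
    then show ?thesis
      using B2[of "inverse x"] poly_ratio_inverse_eq_reflect[OF deg, of "of_real (inverse x)"]
      by (simp add: of_real_inverse)
  qed
  then show ?thesis
    using that by blast
qed

lemma poly_ratio_decay:
  fixes p r :: "complex poly"
  assumes deg: "degree r \<ge> degree p + 2" and nz: "\<And>x::real. x \<ge> 0 \<Longrightarrow> poly r (of_real x) \<noteq> 0"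
  obtains C where "C \<ge> 0"
    and "\<And>x::real. x \<ge> 0 \<Longrightarrow> norm (poly p (of_real x) / poly r (of_real x)) \<le> C * inverse (1 + x^2)"
proof -
  define s where "s = [:1, 0, 1:] * p"
  have "degree s \<le> degree [:1, 0, (1::complex):] + degree p"
    unfolding s_def by (rule degree_mult_le)
  then have "degree s \<le> degree r"
    using deg by simp
  then obtain C where C: "\<And>x::real. x \<ge> 0 \<Longrightarrow> norm (poly s (of_real x) / poly r (of_real x)) \<le> C"
    using poly_ratio_bounded_nonneg nz by blast
  have "norm (poly p (of_real x) / poly r (of_real x)) \<le> C * inverse (1 + x^2)" if "x \<ge> 0" for x :: real
  proof -
    have pos: "1 + x^2 > 0"
      by (simp add: add_pos_nonneg)
    have "poly s (of_real x) / poly r (of_real x) = of_real (1 + x^2) * (poly p (of_real x) / poly r (of_real x))"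
      by (simp add: s_def power2_eq_square algebra_simps)
    then have "norm (poly s (of_real x) / poly r (of_real x)) = (1 + x^2) * norm (poly p (of_real x) / poly r (of_real x))"
      using pos by (simp only: norm_mult norm_of_real abs_of_pos)
    then show ?thesis
      using C[OF that] pos by (simp add: field_simps)
  qed
  moreover have "C \<ge> 0"
    using C[of 0] norm_ge_zero order_trans by blast
  ultimately show ?thesis
    using that by blast
qed

lemma borel_measurable_poly_of_real:
  "(\<lambda>x::real. poly p (of_real x) :: 'a::real_normed_field) \<in> borel_measurable lborel"
  unfolding measurable_lborel2 by (intro borel_measurable_continuous_onI continuous_intros)

lemma set_integrable_poly_ratio:
  fixes p r :: "complex poly"
  assumes deg: "degree r \<ge> degree p + 2" and nz: "\<And>x::real. x \<ge> 0 \<Longrightarrow> poly r (of_real x) \<noteq> 0"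
  shows "set_integrable lborel {0<..} (\<lambda>x. poly p (of_real x) / poly r (of_real x))"
proof -
  obtain C where C0: "C \<ge> 0"
    and C: "\<And>x::real. x \<ge> 0 \<Longrightarrow> norm (poly p (of_real x) / poly r (of_real x)) \<le> C * inverse (1 + x^2)"
    using poly_ratio_decay[OF deg nz] by blast
  show ?thesis
    unfolding set_integrable_def
  proof (rule Bochner_Integration.integrable_bound)
    show "integrable lborel (\<lambda>x. C * inverse (1 + x^2))"
      using integrable_inverse_1_plus_square by (simp add: set_integrable_def einterval_def)
    show "(\<lambda>x. indicator {0<..} x *\<^sub>R (poly p (of_real x) / poly r (of_real x))) \<in> borel_measurable lborel"
      by (intro borel_measurable_scaleR borel_measurable_indicator borel_measurable_divide
          borel_measurable_poly_of_real) auto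
    show "AE x in lborel. norm (indicator {0<..} x *\<^sub>R (poly p (of_real x) / poly r (of_real x)))
        \<le> norm (C * inverse (1 + x^2))"
      using C C0 by (intro always_eventually allI) (auto simp: indicator_def add_pos_nonneg less_imp_le)
  qed
qed

lemma poly_ratio_lipschitz_at:
  fixes p r :: "complex poly"
  assumes nz: "\<And>x::real. x \<ge> 0 \<Longrightarrow> poly r (of_real x) \<noteq> 0" and w: "w \<ge> 0"
  obtains B where "\<And>x. x \<in> {0..b} \<Longrightarrow>
    norm (poly p (of_real x) / poly r (of_real x) - poly p (of_real w) / poly r (of_real w)) \<le> B * \<bar>x - w\<bar>"
proof -
  define R where "R = (\<lambda>x::real. poly p (of_real x) / poly r (of_real x))"
  define P where "P = smult (poly r (of_real w)) p - smult (poly p (of_real w)) r"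
  have "poly P (of_real w) = 0"
    by (simp add: P_def)
  then obtain q where q: "P = [:- of_real w, 1:] * q"
    using poly_eq_0_iff_dvd by (metis dvdE)
  have rw: "poly r (of_real w) \<noteq> 0"
    using nz w by simp
  define Q where "Q = (\<lambda>x::real. poly q (of_real x) / (poly r (of_real x) * poly r (of_real w)))"
  have diff: "R x - R w = of_real (x - w) * Q x" if "x \<ge> 0" for x
  proof -
    have "R x - R w = poly P (of_real x) / (poly r (of_real x) * poly r (of_real w))"
      using nz[OF that] rw by (simp add: R_def P_def field_simps)
    also have "poly P (of_real x) = of_real (x - w) * poly q (of_real x)"
      by (simp add: q algebra_simps)
    finally show ?thesis
      by (simp add: Q_def)
  qed
  have "continuous_on {0..b} Q"
    unfolding Q_def using nz rw by (intro continuous_intros) auto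
  then obtain B where B: "\<And>x. x \<in> {0..b} \<Longrightarrow> norm (Q x) \<le> B"
    using continuous_on_compact_bound[OF compact_Icc] by blast
  have "norm (R x - R w) \<le> B * \<bar>x - w\<bar>" if "x \<in> {0..b}" for x
  proof -
    have "norm (R x - R w) = \<bar>x - w\<bar> * norm (Q x)"
      using that diff[of x] by (simp add: norm_mult del: of_real_diff)
    also have "\<dots> \<le> \<bar>x - w\<bar> * B"
      using B[OF that] by (intro mult_left_mono) auto
    finally show ?thesis
      by (simp add: mult.commute)
  qed
  then show ?thesis
    using that unfolding R_def by blast
qed

section \<open>The Sokhotski--Plemelj formula\<close>

lemma integral_dominated_convergence_at_right:
  fixes s :: "real \<Rightarrow> 'a \<Rightarrow> 'b::{banach, second_countable_topology}" and W :: "'a \<Rightarrow> real"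
  assumes f: "f \<in> borel_measurable M" and s: "\<And>t. t > 0 \<Longrightarrow> s t \<in> borel_measurable M"
    and W: "integrable M W"
    and lim: "AE x in M. ((\<lambda>t. s t x) \<longlongrightarrow> f x) (at_right 0)"
    and bound: "\<And>t. t > 0 \<Longrightarrow> AE x in M. norm (s t x) \<le> W x"
  shows "((\<lambda>t. integral\<^sup>L M (s t)) \<longlongrightarrow> integral\<^sup>L M f) (at_right 0)"
proof (rule tendsto_at_right_sequentially[where b=1])
  fix S :: "nat \<Rightarrow> real"
  assume S: "\<And>n. 0 < S n" "S \<longlonglongrightarrow> 0"
  have S_right: "filterlim S (at_right 0) sequentially"
    using S by (intro tendsto_imp_filterlim_at_right) auto
  show "(\<lambda>n. integral\<^sup>L M (s (S n))) \<longlonglongrightarrow> integral\<^sup>L M f"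
  proof (rule integral_dominated_convergence[where w=W])
    show "AE x in M. (\<lambda>i. s (S i) x) \<longlonglongrightarrow> f x"
      using lim by eventually_elim (rule filterlim_compose[OF _ S_right])
    show "AE x in M. norm (s (S i) x) \<le> W x" for i
      using bound S by auto
    show "s (S i) \<in> borel_measurable M" for i
      using s S by auto
  qed (use f W in auto)
qed simp

text \<open>The singular part \<open>g w / (x - w)\<close> is removed only on the window \<open>(0, 2 w)\<close>, which is
  symmetric about \<open>w\<close>: the remainder is integrable, and the removed part has principal value zero.\<close>

definition subtracted_quotient :: "(real \<Rightarrow> complex) \<Rightarrow> real \<Rightarrow> real \<Rightarrow> complex" where
  "subtracted_quotient g w x = (g x - g w * of_real (indicator {0<..<2*w} x)) / of_real (x - w)"

lemma subtracted_quotient_mult: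
  assumes "w > 0"
  shows "subtracted_quotient g w x * of_real (x - w) = g x - g w * of_real (indicator {0<..<2*w} x)"
  using assms by (cases "x = w") (auto simp: subtracted_quotient_def)

lemma borel_measurable_subtracted_quotient:
  assumes "g \<in> borel_measurable lborel"
  shows "subtracted_quotient g w \<in> borel_measurable lborel"
  unfolding subtracted_quotient_def using assms
  by (intro borel_measurable_divide borel_measurable_diff borel_measurable_times borel_measurable_const
      borel_measurable_of_real borel_measurable_indicator) (auto simp: measurable_lborel2)

lemma subtracted_quotient_dominated:
  fixes g :: "real \<Rightarrow> complex"
  assumes g_int: "set_integrable lborel {0<..} g"
    and lip: "\<And>x. x \<in> {0<..<2*w} \<Longrightarrow> norm (g x - g w) \<le> B * \<bar>x - w\<bar>"
    and w: "w > 0"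
  obtains H where "integrable lborel H" "\<And>x. 0 \<le> H x"
    "\<And>x. x > 0 \<Longrightarrow> norm (subtracted_quotient g w x) \<le> H x"
proof
  define H where "H = (\<lambda>x. max B 0 * indicator {0<..<2*w} x + norm (indicator {0<..} x *\<^sub>R g x) / w)"
  show "integrable lborel H"
    using g_int w unfolding H_def set_integrable_def
    by (intro Bochner_Integration.integrable_add integrable_mult_right integrable_real_indicator
        integrable_divide_zero integrable_norm) auto
  show "0 \<le> H x" for x
    using w by (simp add: H_def)
  show "norm (subtracted_quotient g w x) \<le> H x" if "x > 0" for x
  proof (cases "x < 2*w")
    case True
    have "norm (subtracted_quotient g w x) \<le> max B 0"
    proof (cases "x = w")
      case False
      have "norm (subtracted_quotient g w x) = norm (g x - g w) / \<bar>x - w\<bar>"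
        using True that by (simp add: subtracted_quotient_def norm_divide flip: of_real_diff)
      also have "\<dots> \<le> B"
        using lip[of x] True that False by (simp add: pos_divide_le_eq)
      finally show ?thesis
        by simp
    qed (simp add: subtracted_quotient_def)
    then have "norm (subtracted_quotient g w x) \<le> max B 0 + norm (g x) / w"
      using w by (intro add_increasing2) auto
    then show ?thesis
      using True that by (simp add: H_def)
  next
    case False
    have "norm (subtracted_quotient g w x) = norm (g x) / \<bar>x - w\<bar>"
      using False by (simp add: subtracted_quotient_def norm_divide flip: of_real_diff)
    also have "\<dots> \<le> norm (g x) / w"
      using False w by (intro divide_left_mono) auto
    finally show ?thesis
      using False that by (simp add: H_def)
  qed
qed

lemma set_integrable_subtracted_quotient_mult:
  fixes g a :: "real \<Rightarrow> complex"
  assumes g_meas: "g \<in> borel_measurable lborel" and g_int: "set_integrable lborel {0<..} g"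
    and lip: "\<And>x. x \<in> {0<..<2*w} \<Longrightarrow> norm (g x - g w) \<le> B * \<bar>x - w\<bar>" and w: "w > 0"
    and A: "A \<subseteq> {0<..}" "A \<in> sets lborel"
    and a_meas: "a \<in> borel_measurable lborel" and a_bound: "\<And>x. norm (a x) \<le> 1"
  shows "set_integrable lborel A (\<lambda>x. subtracted_quotient g w x * a x)"
proof -
  obtain H where H_int: "integrable lborel H" and H_nonneg: "\<And>x. 0 \<le> H x"
    and H: "\<And>x. x > 0 \<Longrightarrow> norm (subtracted_quotient g w x) \<le> H x"
    using subtracted_quotient_dominated[OF g_int lip w] by blast
  show ?thesis
    unfolding set_integrable_def
  proof (rule Bochner_Integration.integrable_bound[OF H_int])
    show "(\<lambda>x. indicator A x *\<^sub>R (subtracted_quotient g w x * a x)) \<in> borel_measurable lborel"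
      using A a_meas borel_measurable_subtracted_quotient[OF g_meas]
      by (intro borel_measurable_scaleR borel_measurable_indicator borel_measurable_times) auto
    have "norm (indicator A x *\<^sub>R (subtracted_quotient g w x * a x)) \<le> H x" for x
    proof (cases "x \<in> A")
      case True
      then have "norm (subtracted_quotient g w x * a x) \<le> norm (subtracted_quotient g w x)"
        using a_bound[of x] by (simp add: norm_mult mult_left_le)
      also have "\<dots> \<le> H x"
        using True A by (intro H) auto
      finally show ?thesis
        using True by simp
    qed (simp add: H_nonneg)
    then show "AE x in lborel. norm (indicator A x *\<^sub>R (subtracted_quotient g w x * a x)) \<le> norm (H x)"
      using H_nonneg by (intro always_eventually allI) (auto intro: order_trans)
  qed
qed

lemma set_integral_symmetric_window_inverse:
  "(LINT x:({0<..<w-d} \<union> {w+d<..})|lborel. of_real (indicator {0<..<2*w} x) / of_real (x - w)) = (0::complex)"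
proof -
  define f where "f = (\<lambda>x. indicator ({0<..<w-d} \<union> {w+d<..}) x *\<^sub>R
    (of_real (indicator {0<..<2*w} x) / of_real (x - w) :: complex))"
  have odd: "f (2*w + (-1) * x) = - f x" for x
  proof -
    have ind: "indicator ({0<..<w-d} \<union> {w+d<..}) (2*w + (-1) * x) * indicator {0<..<2*w} (2*w + (-1) * x)
        = (indicator ({0<..<w-d} \<union> {w+d<..}) x * indicator {0<..<2*w} x :: real)"
      by (auto simp: indicator_def)
    have denom: "complex_of_real (2*w + (-1) * x - w) = - of_real (x - w)"
      by simp
    show ?thesis
      unfolding f_def scaleR_conv_of_real
      by (simp only: times_divide_eq_right flip: of_real_mult) (simp only: ind denom divide_minus_right)
  qed
  have "integral\<^sup>L lborel f = \<bar>-1\<bar> *\<^sub>R (LBINT x. f (2*w + (-1) * x))"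
    by (rule lborel_integral_real_affine) simp
  also have "\<dots> = (LBINT x. - f x)"
    by (simp only: odd abs_minus_cancel abs_one scaleR_one)
  also have "\<dots> = - integral\<^sup>L lborel f"
    by (rule integral_minus)
  finally show ?thesis
    unfolding set_lebesgue_integral_def f_def by simp
qed

lemma set_integrable_punctured_window_inverse:
  assumes w: "w > 0" and d: "d > 0"
  shows "set_integrable lborel ({0<..<w-d} \<union> {w+d<..})
    (\<lambda>x. of_real (indicator {0<..<2*w} x) / of_real (x - w) :: complex)"
  unfolding set_integrable_def
proof (rule Bochner_Integration.integrable_bound)
  let ?S = "{0<..<w-d} \<union> {w+d<..}" and ?k = "\<lambda>x. of_real (indicator {0<..<2*w} x) / of_real (x - w) :: complex"
  show "integrable lborel (\<lambda>x. indicator {0<..<2*w} x / d)"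
    using w by (intro integrable_divide_zero integrable_real_indicator) auto
  show "(\<lambda>x. indicator ?S x *\<^sub>R ?k x) \<in> borel_measurable lborel"
    by (intro borel_measurable_scaleR borel_measurable_indicator borel_measurable_divide
        borel_measurable_of_real) (auto simp: measurable_lborel2)
  have "norm (indicator ?S x *\<^sub>R ?k x) \<le> indicator {0<..<2*w} x / d" for x
  proof (cases "x \<in> ?S")
    case True
    then have "d \<le> \<bar>x - w\<bar>"
      by auto
    then show ?thesis
      using True d by (auto simp: indicator_def norm_divide divide_left_mono simp flip: of_real_diff)
  qed (use d in simp)
  then show "AE x in lborel. norm (indicator ?S x *\<^sub>R ?k x) \<le> norm (indicator {0<..<2*w} x / d)"
    using d by (intro always_eventually allI) auto
qed

lemma integral_punctured_eq_subtracted_quotient: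
  fixes g :: "real \<Rightarrow> complex"
  assumes g_meas: "g \<in> borel_measurable lborel" and g_int: "set_integrable lborel {0<..} g"
    and lip: "\<And>x. x \<in> {0<..<2*w} \<Longrightarrow> norm (g x - g w) \<le> B * \<bar>x - w\<bar>" and w: "w > 0"
    and d: "d > 0"
  shows "integral ({0<..<w-d} \<union> {w+d<..}) (\<lambda>x. g x / of_real (x - w))
    = (LINT x:({0<..<w-d} \<union> {w+d<..})|lborel. subtracted_quotient g w x)"
proof -
  define S where "S = {0<..<w-d} \<union> {w+d<..}"
  define h where "h = subtracted_quotient g w"
  define k where "k = (\<lambda>x. of_real (indicator {0<..<2*w} x) / of_real (x - w) :: complex)"
  have "S \<subseteq> {0<..}"
    using w d by (auto simp: S_def)
  then have h_int: "set_integrable lborel S h"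
    using set_integrable_subtracted_quotient_mult[OF g_meas g_int lip w, of S "\<lambda>_. 1"]
    by (simp add: h_def S_def)
  have k_int: "set_integrable lborel S k"
    unfolding S_def k_def by (rule set_integrable_punctured_window_inverse[OF w d])
  have "integral S (\<lambda>x. g x / of_real (x - w)) = integral S (\<lambda>x. h x + g w * k x)"
  proof (rule integral_cong)
    fix x assume "x \<in> S"
    then have "x \<noteq> w"
      using d by (auto simp: S_def)
    then show "g x / of_real (x - w) = h x + g w * k x"
      using subtracted_quotient_mult[OF w, of g x]
      by (simp add: h_def k_def field_simps flip: of_real_diff)
  qed
  also have "\<dots> = (LINT x:S|lborel. h x + g w * k x)"
    using h_int k_int
    by (intro set_borel_integral_eq_integral(2)[symmetric] set_integral_add(1) set_integrable_mult_right) auto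
  also have "\<dots> = (LINT x:S|lborel. h x) + g w * (LINT x:S|lborel. k x)"
    using h_int k_int by (subst set_integral_add(2)) auto
  finally show ?thesis
    using set_integral_symmetric_window_inverse[of w d] by (simp add: S_def h_def k_def)
qed

lemma pv_integral_eq_subtracted_quotient:
  fixes g :: "real \<Rightarrow> complex"
  assumes g_meas: "g \<in> borel_measurable lborel" and g_int: "set_integrable lborel {0<..} g"
    and lip: "\<And>x. x \<in> {0<..<2*w} \<Longrightarrow> norm (g x - g w) \<le> B * \<bar>x - w\<bar>" and w: "w > 0"
  shows "pv_integral g w = (LINT x:{0<..}|lborel. subtracted_quotient g w x)"
proof -
  define S where "S = (\<lambda>d. {0<..<w-d} \<union> {w+d<..})"
  define h where "h = subtracted_quotient g w"
  obtain H where H_int: "integrable lborel H" and H_nonneg: "\<And>x. 0 \<le> H x"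
    and H: "\<And>x. x > 0 \<Longrightarrow> norm (h x) \<le> H x"
    using subtracted_quotient_dominated[OF g_int lip w] unfolding h_def by blast
  have h_meas: "h \<in> borel_measurable lborel"
    unfolding h_def by (rule borel_measurable_subtracted_quotient[OF g_meas])
  have "((\<lambda>d. LINT x:S d|lborel. h x) \<longlongrightarrow> (LINT x:{0<..}|lborel. h x)) (at_right 0)"
    unfolding set_lebesgue_integral_def
  proof (rule integral_dominated_convergence_at_right[where W=H])
    show "(\<lambda>x. indicator {0<..} x *\<^sub>R h x) \<in> borel_measurable lborel"
      using h_meas by (intro borel_measurable_scaleR borel_measurable_indicator) auto
    show "(\<lambda>x. indicator (S t) x *\<^sub>R h x) \<in> borel_measurable lborel" for t
      using h_meas by (intro borel_measurable_scaleR borel_measurable_indicator) (auto simp: S_def)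
    show "integrable lborel H"
      by (rule H_int)
    show "AE x in lborel. ((\<lambda>t. indicator (S t) x *\<^sub>R h x) \<longlongrightarrow> indicator {0<..} x *\<^sub>R h x) (at_right 0)"
      using AE_lborel_singleton[of w]
    proof eventually_elim
      case (elim x)
      then have "\<bar>x - w\<bar> > 0"
        by simp
      then have "eventually (\<lambda>t. indicator (S t) x *\<^sub>R h x = indicator {0<..} x *\<^sub>R h x) (at_right 0)"
        unfolding eventually_at_right_field using w
        by (intro exI[of _ "\<bar>x - w\<bar>"]) (auto simp: S_def indicator_def)
      then show ?case
        by (rule tendsto_eventually)
    qed
    have "norm (indicator (S t) x *\<^sub>R h x) \<le> H x" if "t > 0" for t x
      using H[of x] H_nonneg[of x] that w by (auto simp: indicator_def S_def)
    then show "AE x in lborel. norm (indicator (S t) x *\<^sub>R h x) \<le> H x" if "t > 0" for t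
      using that by simp
  qed
  moreover have "eventually (\<lambda>d. (LINT x:S d|lborel. h x) = integral (S d) (\<lambda>x. g x / of_real (x - w))) (at_right 0)"
    using eventually_at_right_less[of 0] unfolding S_def h_def
    by eventually_elim (rule integral_punctured_eq_subtracted_quotient[OF g_meas g_int lip w, symmetric])
  ultimately have "((\<lambda>d. integral (S d) (\<lambda>x. g x / of_real (x - w))) \<longlongrightarrow> (LINT x:{0<..}|lborel. h x)) (at_right 0)"
    by (rule Lim_transform_eventually)
  then show ?thesis
    unfolding pv_integral_def S_def h_def by (intro tendsto_Lim) auto
qed

lemma norm_real_minus_divide_le_1:
  assumes "Re z = w" and "Im z \<noteq> 0"
  shows "norm (of_real (x - w) / (of_real x - z)) \<le> 1"
proof -
  have "\<bar>x - w\<bar> \<le> norm (of_real x - z)"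
    using abs_Re_le_cmod[of "of_real x - z"] assms(1) by simp
  then show ?thesis
    using real_minus_nonreal_nonzero[OF assms(2), of x]
    by (simp add: norm_divide divide_le_eq_1 flip: of_real_diff)
qed

lemma borel_measurable_real_minus_divide:
  "(\<lambda>x. of_real (x - w) / (of_real x - z) :: complex) \<in> borel_measurable lborel"
  by (intro borel_measurable_divide borel_measurable_diff borel_measurable_of_real borel_measurable_const)
    (auto simp: measurable_lborel2)

text \<open>As \<open>z \<rightarrow> w\<close>, the first term tends to the integral of the subtracted quotient by dominated
  convergence, and the second one is computed explicitly.\<close>

lemma set_integral_divide_real_minus_split:
  fixes g :: "real \<Rightarrow> complex"
  assumes g_meas: "g \<in> borel_measurable lborel" and g_int: "set_integrable lborel {0<..} g"
    and lip: "\<And>x. x \<in> {0<..<2*w} \<Longrightarrow> norm (g x - g w) \<le> B * \<bar>x - w\<bar>" and w: "w > 0"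
    and z: "Re z = w" "Im z \<noteq> 0"
  shows "(LINT x:{0<..}|lborel. g x / (of_real x - z))
    = (LINT x:{0<..}|lborel. subtracted_quotient g w x * (of_real (x - w) / (of_real x - z)))
      + g w * (LBINT x:{0<..<2*w}. 1 / (of_real x - z))"
proof -
  define h where "h = subtracted_quotient g w"
  define q where "q = (\<lambda>x. of_real (x - w) / (of_real x - z) :: complex)"
  define chi where "chi = (\<lambda>x. of_real (indicator {0<..<2*w} x) :: complex)"
  have hq_int: "set_integrable lborel {0<..} (\<lambda>x. h x * q x)"
    unfolding h_def q_def using norm_real_minus_divide_le_1[OF z]
    by (intro set_integrable_subtracted_quotient_mult[OF g_meas g_int lip w]
        borel_measurable_real_minus_divide) auto
  have chi_int: "set_integrable lborel {0<..} (\<lambda>x. g w * (chi x / (of_real x - z)))"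
  proof (intro set_integrable_mult_right set_integrable_divide_real_minus[OF _ z(2)])
    have "integrable lborel chi"
      unfolding chi_def using w by (intro integrable_of_real integrable_real_indicator) auto
    moreover have "(\<lambda>x. indicator {0<..} x *\<^sub>R chi x) = chi"
      by (auto simp: chi_def indicator_def)
    ultimately show "set_integrable lborel {0<..} chi"
      unfolding set_integrable_def by simp
  qed
  have pointwise: "g x / (of_real x - z) = h x * q x + g w * (chi x / (of_real x - z))" for x
  proof -
    have "h x * q x + g w * (chi x / (of_real x - z)) = (h x * of_real (x - w) + g w * chi x) / (of_real x - z)"
      by (simp only: q_def times_divide_eq_right add_divide_distrib)
    also have "h x * of_real (x - w) + g w * chi x = g x"
      using subtracted_quotient_mult[OF w, of g x] by (simp add: h_def chi_def)
    finally show ?thesis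
      by simp
  qed
  have "(LINT x:{0<..}|lborel. g x / (of_real x - z))
      = (LINT x:{0<..}|lborel. h x * q x) + g w * (LINT x:{0<..}|lborel. chi x / (of_real x - z))"
    unfolding pointwise using hq_int chi_int by (simp only: set_integral_add(2) set_integral_mult_right)
  also have "(LINT x:{0<..}|lborel. chi x / (of_real x - z)) = (LBINT x:{0<..<2*w}. 1 / (of_real x - z))"
    unfolding set_lebesgue_integral_def
    by (intro Bochner_Integration.integral_cong refl) (auto simp: chi_def indicator_def)
  finally show ?thesis
    by (simp only: h_def q_def)
qed

lemma tendsto_real_minus_divide:
  assumes "x \<noteq> w"
  shows "((\<lambda>\<epsilon>. of_real (x - w) / (of_real x - (of_real w + of_real \<sigma> * \<i> * of_real \<epsilon>)) :: complex)
    \<longlongrightarrow> 1) (at_right 0)"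
proof -
  have "((\<lambda>\<epsilon>. of_real w + of_real \<sigma> * \<i> * of_real \<epsilon> :: complex) \<longlongrightarrow> of_real w) (at_right 0)"
    by (rule tendsto_eq_intros tendsto_ident_at refl | simp)+
  then have "((\<lambda>\<epsilon>. of_real (x - w) / (of_real x - (of_real w + of_real \<sigma> * \<i> * of_real \<epsilon>)) :: complex)
      \<longlongrightarrow> of_real (x - w) / (of_real x - of_real w)) (at_right 0)"
    using assms by (intro tendsto_intros) auto
  then show ?thesis
    using assms by simp
qed

lemma tendsto_set_integral_subtracted_quotient:
  fixes g :: "real \<Rightarrow> complex"
  assumes g_meas: "g \<in> borel_measurable lborel" and g_int: "set_integrable lborel {0<..} g"
    and lip: "\<And>x. x \<in> {0<..<2*w} \<Longrightarrow> norm (g x - g w) \<le> B * \<bar>x - w\<bar>"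
    and w: "w > 0" and \<sigma>: "\<sigma> = 1 \<or> \<sigma> = -1"
  shows "((\<lambda>\<epsilon>. LINT x:{0<..}|lborel. subtracted_quotient g w x
      * (of_real (x - w) / (of_real x - (of_real w + of_real \<sigma> * \<i> * of_real \<epsilon>))))
    \<longlongrightarrow> (LINT x:{0<..}|lborel. subtracted_quotient g w x)) (at_right 0)"
proof -
  define z where "z = (\<lambda>\<epsilon>. of_real w + of_real \<sigma> * \<i> * of_real \<epsilon> :: complex)"
  define h where "h = subtracted_quotient g w"
  define q where "q = (\<lambda>\<epsilon> x. of_real (x - w) / (of_real x - z \<epsilon>) :: complex)"
  obtain H where H_int: "integrable lborel H" and H_nonneg: "\<And>x. 0 \<le> H x"
    and H: "\<And>x. x > 0 \<Longrightarrow> norm (h x) \<le> H x"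
    using subtracted_quotient_dominated[OF g_int lip w] unfolding h_def by blast
  have z: "Re (z \<epsilon>) = w" "Im (z \<epsilon>) \<noteq> 0" if "\<epsilon> > 0" for \<epsilon>
    using that \<sigma> by (auto simp: z_def)
  have q_lim: "((\<lambda>\<epsilon>. q \<epsilon> x) \<longlongrightarrow> 1) (at_right 0)" if "x \<noteq> w" for x
    unfolding q_def z_def using that by (rule tendsto_real_minus_divide)
  have "((\<lambda>\<epsilon>. LINT x:{0<..}|lborel. h x * q \<epsilon> x) \<longlongrightarrow> (LINT x:{0<..}|lborel. h x)) (at_right 0)"
    unfolding set_lebesgue_integral_def
  proof (rule integral_dominated_convergence_at_right[where W=H])
    show "(\<lambda>x. indicator {0<..} x *\<^sub>R h x) \<in> borel_measurable lborel"
      unfolding h_def using borel_measurable_subtracted_quotient[OF g_meas]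
      by (intro borel_measurable_scaleR borel_measurable_indicator) auto
    show "(\<lambda>x. indicator {0<..} x *\<^sub>R (h x * q \<epsilon> x)) \<in> borel_measurable lborel" for \<epsilon>
      unfolding h_def q_def using borel_measurable_subtracted_quotient[OF g_meas]
      by (intro borel_measurable_scaleR borel_measurable_indicator borel_measurable_times
          borel_measurable_real_minus_divide) auto
    show "integrable lborel H"
      by (rule H_int)
    have "((\<lambda>\<epsilon>. indicator {0<..} x *\<^sub>R (h x * q \<epsilon> x)) \<longlongrightarrow> indicator {0<..} x *\<^sub>R h x) (at_right 0)" for x
    proof (cases "x = w")
      case True
      then show ?thesis
        by (simp add: h_def subtracted_quotient_def)
    next
      case False
      show ?thesis
        using tendsto_scaleR[OF tendsto_const tendsto_mult[OF tendsto_const q_lim[OF False]]] by simp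
    qed
    then show "AE x in lborel. ((\<lambda>\<epsilon>. indicator {0<..} x *\<^sub>R (h x * q \<epsilon> x)) \<longlongrightarrow> indicator {0<..} x *\<^sub>R h x) (at_right 0)"
      by simp
    have "norm (indicator {0<..} x *\<^sub>R (h x * q \<epsilon> x)) \<le> H x" if "\<epsilon> > 0" for \<epsilon> x
    proof (cases "x > 0")
      case True
      have "norm (h x * q \<epsilon> x) \<le> norm (h x)"
        using norm_real_minus_divide_le_1[OF z[OF that], of x] unfolding norm_mult q_def
        by (rule mult_left_le) simp
      then show ?thesis
        using H[OF True] True by simp
    qed (simp add: H_nonneg)
    then show "AE x in lborel. norm (indicator {0<..} x *\<^sub>R (h x * q \<epsilon> x)) \<le> H x" if "\<epsilon> > 0" for \<epsilon>
      using that by simp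
  qed
  then show ?thesis
    by (simp only: h_def q_def z_def)
qed

lemma integral_window_inverse:
  fixes w b :: real
  assumes w: "w > 0" and b: "b \<noteq> 0"
  shows "(LBINT x:{0<..<2*w}. 1 / (of_real x - (of_real w + \<i> * of_real b))) = 2 * \<i> * of_real (arctan (w / b))"
proof -
  define z where "z = of_real w + \<i> * of_real b"
  (* A branch of log (x - z) on the real line, written with real functions to avoid the branch cut. *)
  define F where "F = (\<lambda>x::real. of_real (ln ((x - w)^2 + b^2) / 2) + \<i> * of_real (arctan ((x - w) / b)))"
  have D_pos: "(x - w)^2 + b^2 > 0" for x
    using b by (simp add: add_nonneg_pos)
  have z_ne: "of_real x - z \<noteq> 0" for x
    using real_minus_nonreal_nonzero[of z x] b by (simp add: z_def)
  have F_deriv: "(F has_vector_derivative 1 / (of_real x - z)) (at x within A)" for x A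
  proof -
    have ln_deriv: "((\<lambda>x. ln ((x - w)^2 + b^2) / 2) has_real_derivative (x - w) / ((x - w)^2 + b^2)) (at x within A)"
    proof -
      have "b^2 + (x - w)^2 \<noteq> 0"
        using D_pos[of x] by linarith
      then show ?thesis
        using D_pos[of x] b by (auto intro!: derivative_eq_intros simp: field_simps)
    qed
    have arctan_deriv: "((\<lambda>x. arctan ((x - w) / b)) has_real_derivative b / ((x - w)^2 + b^2)) (at x within A)"
    proof -
      have "inverse (1 + ((x - w) / b)^2) * (1 / b) = b / ((x - w)^2 + b^2)"
        using b D_pos[of x] by (simp add: power_divide field_simps power2_eq_square)
      with b show ?thesis
        by (auto intro!: derivative_eq_intros)
    qed
    have "1 / (of_real x - z) = of_real ((x - w) / ((x - w)^2 + b^2)) + \<i> * of_real (b / ((x - w)^2 + b^2))"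
      using D_pos[of x] by (simp add: z_def complex_eq_iff Re_divide Im_divide power2_eq_square[of "_ + _"])
    then show ?thesis
      unfolding F_def
      by (simp only:) (intro has_vector_derivative_add has_vector_derivative_of_real ln_deriv
          has_vector_derivative_mult_right arctan_deriv)
  qed
  have "(LBINT x=ereal 0..ereal (2*w). 1 / (of_real x - z)) = F (2*w) - F 0"
    using w z_ne by (intro interval_integral_FTC_finite F_deriv continuous_intros) auto
  also have "\<dots> = 2 * \<i> * of_real (arctan (w / b))"
    by (simp add: F_def arctan_minus power2_eq_square field_simps)
  finally show ?thesis
    using w by (simp add: z_def interval_integral_Ioo)
qed

lemma tendsto_integral_window_inverse:
  assumes w: "w > 0" and \<sigma>: "\<sigma> = 1 \<or> \<sigma> = -1"
  shows "((\<lambda>\<epsilon>. LBINT x:{0<..<2*w}. 1 / (of_real x - (of_real w + of_real \<sigma> * \<i> * of_real \<epsilon>)))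
           \<longlongrightarrow> of_real \<sigma> * \<i> * of_real pi) (at_right 0)"
proof (rule tendsto_cong_limit)
  have "filterlim (\<lambda>\<epsilon>. w * inverse \<epsilon>) at_top (at_right (0::real))"
    by (rule filterlim_tendsto_pos_mult_at_top[OF tendsto_const w filterlim_inverse_at_top_right])
  then have "filterlim (\<lambda>\<epsilon>. w / \<epsilon>) at_top (at_right (0::real))"
    by (simp add: divide_inverse)
  then have "((\<lambda>\<epsilon>. arctan (w / \<epsilon>)) \<longlongrightarrow> pi / 2) (at_right 0)"
    by (rule filterlim_compose[OF tendsto_arctan_at_top])
  then have "((\<lambda>\<epsilon>. 2 * \<i> * of_real (\<sigma> * arctan (w / \<epsilon>))) \<longlongrightarrow> 2 * \<i> * of_real (\<sigma> * (pi / 2))) (at_right 0)"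
    by (intro tendsto_intros)
  moreover have "eventually (\<lambda>\<epsilon>. 2 * \<i> * of_real (\<sigma> * arctan (w / \<epsilon>))
      = (LBINT x:{0<..<2*w}. 1 / (of_real x - (of_real w + of_real \<sigma> * \<i> * of_real \<epsilon>)))) (at_right 0)"
    using eventually_at_right_less[of 0]
  proof eventually_elim
    case (elim \<epsilon>)
    have "arctan (w / (\<sigma> * \<epsilon>)) = \<sigma> * arctan (w / \<epsilon>)"
      using \<sigma> by (auto simp: arctan_minus)
    moreover have "\<sigma> * \<epsilon> \<noteq> 0"
      using \<sigma> elim by auto
    ultimately show ?case
      using integral_window_inverse[OF w, of "\<sigma> * \<epsilon>"] by (simp add: ac_simps)
  qed
  ultimately show "((\<lambda>\<epsilon>. LBINT x:{0<..<2*w}. 1 / (of_real x - (of_real w + of_real \<sigma> * \<i> * of_real \<epsilon>)))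
      \<longlongrightarrow> 2 * \<i> * of_real (\<sigma> * (pi / 2))) (at_right 0)"
    by (rule Lim_transform_eventually)
qed simp

lemma sokhotski_plemelj:
  fixes g :: "real \<Rightarrow> complex"
  assumes g_meas: "g \<in> borel_measurable lborel" and g_int: "set_integrable lborel {0<..} g"
    and lip: "\<And>x. x \<in> {0<..<2*w} \<Longrightarrow> norm (g x - g w) \<le> B * \<bar>x - w\<bar>"
    and w: "w > 0" and \<sigma>: "\<sigma> = 1 \<or> \<sigma> = -1"
  shows "((\<lambda>\<epsilon>. LINT x:{0<..}|lborel. g x / (of_real x - (of_real w + of_real \<sigma> * \<i> * of_real \<epsilon>)))
           \<longlongrightarrow> pv_integral g w + of_real \<sigma> * \<i> * of_real pi * g w) (at_right 0)"
proof -
  define z where "z = (\<lambda>\<epsilon>. of_real w + of_real \<sigma> * \<i> * of_real \<epsilon> :: complex)"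
  have "((\<lambda>\<epsilon>. (LINT x:{0<..}|lborel. subtracted_quotient g w x * (of_real (x - w) / (of_real x - z \<epsilon>)))
        + g w * (LBINT x:{0<..<2*w}. 1 / (of_real x - z \<epsilon>)))
      \<longlongrightarrow> (LINT x:{0<..}|lborel. subtracted_quotient g w x) + g w * (of_real \<sigma> * \<i> * of_real pi)) (at_right 0)"
    unfolding z_def
    by (intro tendsto_add tendsto_mult_left tendsto_set_integral_subtracted_quotient[OF g_meas g_int lip w \<sigma>]
        tendsto_integral_window_inverse[OF w \<sigma>])
  moreover have "eventually (\<lambda>\<epsilon>. (LINT x:{0<..}|lborel. subtracted_quotient g w x * (of_real (x - w) / (of_real x - z \<epsilon>)))
        + g w * (LBINT x:{0<..<2*w}. 1 / (of_real x - z \<epsilon>))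
      = (LINT x:{0<..}|lborel. g x / (of_real x - z \<epsilon>))) (at_right 0)"
    using eventually_at_right_less[of 0]
  proof eventually_elim
    case (elim \<epsilon>)
    then have "Re (z \<epsilon>) = w" "Im (z \<epsilon>) \<noteq> 0"
      using \<sigma> by (auto simp: z_def)
    then show ?case
      using set_integral_divide_real_minus_split[OF g_meas g_int lip w] by simp
  qed
  ultimately have "((\<lambda>\<epsilon>. LINT x:{0<..}|lborel. g x / (of_real x - z \<epsilon>))
      \<longlongrightarrow> (LINT x:{0<..}|lborel. subtracted_quotient g w x) + g w * (of_real \<sigma> * \<i> * of_real pi)) (at_right 0)"
    by (rule Lim_transform_eventually)
  moreover have "pv_integral g w = (LINT x:{0<..}|lborel. subtracted_quotient g w x)"
    by (rule pv_integral_eq_subtracted_quotient[OF g_meas g_int lip w])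
  ultimately show ?thesis
    by (simp add: z_def ac_simps)
qed

lemma pv_integral_cong:
  assumes w: "w > 0" and eq: "\<And>x. x > 0 \<Longrightarrow> g x = g' x"
  shows "pv_integral g w = pv_integral g' w"
  unfolding pv_integral_def
proof (rule Lim_cong)
  show "\<forall>\<^sub>F d in at_right 0. integral ({0<..<w - d} \<union> {w + d<..}) (\<lambda>x. g x / of_real (x - w))
      = integral ({0<..<w - d} \<union> {w + d<..}) (\<lambda>x. g' x / of_real (x - w))"
    using eventually_at_right_less[of 0]
  proof eventually_elim
    case (elim d)
    show ?case
      using w elim by (intro integral_cong) (auto simp: eq)
  qed
qed simp

section \<open>Boundary values\<close>

lemma tendsto_self_energy:
  fixes v :: "'n::finite \<Rightarrow> real \<Rightarrow> complex" and pp rr :: "'n \<Rightarrow> 'n \<Rightarrow> complex poly"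
  assumes ff: "\<And>m n x. x > 0 \<Longrightarrow> cnj (v m x) * v n x = poly (pp m n) (of_real x) / poly (rr m n) (of_real x)"
    and deg: "\<And>m n. degree (rr m n) \<ge> degree (pp m n) + 2"
    and nozero: "\<And>m n x. x \<ge> 0 \<Longrightarrow> poly (rr m n) (of_real x) \<noteq> 0"
    and w: "w > 0" and \<sigma>: "\<sigma> = 1 \<or> \<sigma> = -1"
  shows "((\<lambda>\<epsilon>. self_energy v (of_real w + of_real \<sigma> * \<i> * of_real \<epsilon>))
           \<longlongrightarrow> (\<chi> m k. D_mat v w $ m $ k + of_real \<sigma> * \<i> * of_real pi * Gamma_mat v w $ m $ k)) (at_right 0)"
proof (intro vec_tendstoI)
  fix m k
  define R where "R = (\<lambda>x::real. poly (pp m k) (of_real x) / poly (rr m k) (of_real x))"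
  have vR: "cnj (v m x) * v k x = R x" if "x > 0" for x
    using ff[OF that] by (simp add: R_def)
  obtain B where B: "\<And>x. x \<in> {0..2*w} \<Longrightarrow> norm (R x - R w) \<le> B * \<bar>x - w\<bar>"
    using poly_ratio_lipschitz_at[OF nozero[where m = m and n = k] less_imp_le[OF w], where b = "2*w" and p = "pp m k"]
    unfolding R_def by blast
  have "((\<lambda>\<epsilon>. LINT x:{0<..}|lborel. R x / (of_real x - (of_real w + of_real \<sigma> * \<i> * of_real \<epsilon>)))
      \<longlongrightarrow> pv_integral R w + of_real \<sigma> * \<i> * of_real pi * R w) (at_right 0)"
  proof (rule sokhotski_plemelj[OF _ _ _ w \<sigma>])
    show "R \<in> borel_measurable lborel"
      unfolding R_def by (intro borel_measurable_divide borel_measurable_poly_of_real)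
    show "set_integrable lborel {0<..} R"
      unfolding R_def by (rule set_integrable_poly_ratio[OF deg nozero])
    show "norm (R x - R w) \<le> B * \<bar>x - w\<bar>" if "x \<in> {0<..<2*w}" for x
      using B that by auto
  qed
  moreover have "self_energy v z $ m $ k = (LINT x:{0<..}|lborel. R x / (of_real x - z))" for z
    unfolding self_energy_def by (simp, intro set_lebesgue_integral_cong) (auto simp: vR)
  moreover have "pv_integral (\<lambda>x. cnj (v m x) * v k x) w = pv_integral R w"
    by (rule pv_integral_cong[OF w vR])
  ultimately show "((\<lambda>\<epsilon>. self_energy v (of_real w + of_real \<sigma> * \<i> * of_real \<epsilon>) $ m $ k)
      \<longlongrightarrow> (\<chi> m k. D_mat v w $ m $ k + of_real \<sigma> * \<i> * of_real pi * Gamma_mat v w $ m $ k) $ m $ k) (at_right 0)"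
    using vR[OF w] by (simp add: D_mat_def Gamma_mat_def)
qed

lemma tendsto_Kz_mat:
  fixes v :: "'n::finite \<Rightarrow> real \<Rightarrow> complex" and pp rr :: "'n \<Rightarrow> 'n \<Rightarrow> complex poly"
  assumes ff: "\<And>m n x. x > 0 \<Longrightarrow> cnj (v m x) * v n x = poly (pp m n) (of_real x) / poly (rr m n) (of_real x)"
    and deg: "\<And>m n. degree (rr m n) \<ge> degree (pp m n) + 2"
    and nozero: "\<And>m n x. x \<ge> 0 \<Longrightarrow> poly (rr m n) (of_real x) \<noteq> 0"
    and w: "w > 0" and \<sigma>: "\<sigma> = 1 \<or> \<sigma> = -1"
  shows "((\<lambda>\<epsilon>. Kz_mat om lam v (of_real w + of_real \<sigma> * \<i> * of_real \<epsilon>)) \<longlongrightarrow> K_mat \<sigma> om lam v w) (at_right 0)"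
proof (intro vec_tendstoI)
  fix m k
  have "((\<lambda>\<epsilon>. self_energy v (of_real w + of_real \<sigma> * \<i> * of_real \<epsilon>) $ m $ k)
      \<longlongrightarrow> D_mat v w $ m $ k + of_real \<sigma> * \<i> * of_real pi * Gamma_mat v w $ m $ k) (at_right 0)"
    using tendsto_vec_nth[OF tendsto_vec_nth[OF tendsto_self_energy[OF ff deg nozero w \<sigma>]]] by simp
  then have "((\<lambda>\<epsilon>. K0_mat om $ m $ k - of_real (lam^2) * self_energy v (of_real w + of_real \<sigma> * \<i> * of_real \<epsilon>) $ m $ k)
      \<longlongrightarrow> K0_mat om $ m $ k - of_real (lam^2) * (D_mat v w $ m $ k + of_real \<sigma> * \<i> * of_real pi * Gamma_mat v w $ m $ k))
      (at_right 0)"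
    by (intro tendsto_intros)
  then show "((\<lambda>\<epsilon>. Kz_mat om lam v (of_real w + of_real \<sigma> * \<i> * of_real \<epsilon>) $ m $ k)
      \<longlongrightarrow> K_mat \<sigma> om lam v w $ m $ k) (at_right 0)"
    unfolding Kz_mat_def K_mat_def by (simp add: algebra_simps)
qed

theorem lemma1:
  fixes om :: "'n::{finite,linorder} \<Rightarrow> real"
    and lam :: real
    and v :: "'n \<Rightarrow> real \<Rightarrow> complex"
    and pp rr :: "'n \<Rightarrow> 'n \<Rightarrow> complex poly"
    and \<sigma> :: real
  assumes om_mono: "mono om"
    and v_L2: "\<And>n. L2pos (v n)"
    and ff: "\<And>m n w. w > 0 \<Longrightarrow>
               cnj (v m w) * v n w = poly (pp m n) (complex_of_real w) / poly (rr m n) (complex_of_real w)"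
    and deg: "\<And>m n. degree (rr m n) \<ge> degree (pp m n) + 2"
    and nozero: "\<And>m n w. w \<ge> 0 \<Longrightarrow> poly (rr m n) (complex_of_real w) \<noteq> 0"
    and pzero: "\<And>m n. poly (pp m n) 0 = 0"
    and sigma: "\<sigma> = 1 \<or> \<sigma> = -1"
    and detK: "\<And>w. w > 0 \<Longrightarrow> det (K_mat \<sigma> om lam v w - mat (complex_of_real w)) \<noteq> 0"
  shows "\<forall>w>0. ((\<lambda>\<epsilon>. red_resolvent om lam v (complex_of_real w + complex_of_real \<sigma> * \<i> * complex_of_real \<epsilon>))
            \<longlongrightarrow> matrix_inv (K_mat \<sigma> om lam v w - mat (complex_of_real w))) (at_right 0)"
proof (intro allI impI)
  fix w :: real assume w: "w > 0"
  define z where "z = (\<lambda>\<epsilon>. complex_of_real w + complex_of_real \<sigma> * \<i> * complex_of_real \<epsilon>)"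
  have "(z \<longlongrightarrow> of_real w) (at_right 0)"
    unfolding z_def by (rule tendsto_eq_intros tendsto_ident_at refl | simp)+
  then have "((\<lambda>\<epsilon>. mat (z \<epsilon>)) \<longlongrightarrow> mat (of_real w)) (at_right 0)"
    by (intro vec_tendstoI) (auto simp: mat_def)
  then have "((\<lambda>\<epsilon>. Kz_mat om lam v (z \<epsilon>) - mat (z \<epsilon>)) \<longlongrightarrow> K_mat \<sigma> om lam v w - mat (of_real w)) (at_right 0)"
    unfolding z_def by (intro tendsto_diff tendsto_Kz_mat[OF ff deg nozero w sigma])
  then have "((\<lambda>\<epsilon>. matrix_inv (Kz_mat om lam v (z \<epsilon>) - mat (z \<epsilon>)))
      \<longlongrightarrow> matrix_inv (K_mat \<sigma> om lam v w - mat (of_real w))) (at_right 0)"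
    using detK[OF w] by (rule tendsto_matrix_inv)
  moreover have "eventually (\<lambda>\<epsilon>. matrix_inv (Kz_mat om lam v (z \<epsilon>) - mat (z \<epsilon>)) = red_resolvent om lam v (z \<epsilon>)) (at_right 0)"
    using eventually_at_right_less[of 0]
  proof eventually_elim
    case (elim \<epsilon>)
    then have "Im (z \<epsilon>) \<noteq> 0"
      using sigma by (auto simp: z_def)
    then show ?case
      by (rule red_resolvent_eq_matrix_inv[OF v_L2, symmetric])
  qed
  ultimately show "((\<lambda>\<epsilon>. red_resolvent om lam v (z \<epsilon>)) \<longlongrightarrow> matrix_inv (K_mat \<sigma> om lam v w - mat (of_real w))) (at_right 0)"
    by (rule Lim_transform_eventually)
qed

end
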